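(* For the binary tree-shifts $X_{15}=(C,D)$ and $X_{17}=(C,F)$, the limit $h_{PS}$ exists, $h_{PS}(X_{15})=h_{PS}(X_{17})$, and $$\tfrac14\log2\le h_{PS}(X_{15})\le\tfrac18\log7.$$
   Context: Binary tree-shifts: $k=2$, directions $a_1,a_2$, alphabet $\{0,1\}$; $(P,Q)$ is the set of trees $t:\{a_1,a_2\}^*\to\{0,1\}$ with $P_{t_x,t_{xa_1}}=1$, $Q_{t_x,t_{xa_2}}=1$ for all nodes $x$. Matrices: $C=\begin{pmatrix}0&1\\1&0\end{pmatrix}$, $D=\begin{pmatrix}1&1\\1&0\end{pmatrix}$, $F=\begin{pmatrix}0&1\\1&1\end{pmatrix}$. $p(n)$ is the number of allowed blocks of length $n$ (labellings $t|_{\Delta_n}$, $\Delta_n$ the words of length $\le n$), and $h_{PS}=\lim_{n\to\infty}\frac{\log p(n)}{1+2+\cdots+2^n}$. *)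

theory Defs
  imports Complex_Main "HOL-Library.FuncSet"
begin

datatype dir = A1 | A2

type_synonym tmat = "nat \<Rightarrow> nat \<Rightarrow> nat"

definition matC :: tmat where
  "matC i j = (if (i,j) \<in> {(0,1),(1,0)} then 1 else 0)"
definition matD :: tmat where
  "matD i j = (if (i,j) \<in> {(0,0),(0,1),(1,0)} then 1 else 0)"
definition matF :: tmat where
  "matF i j = (if (i,j) \<in> {(0,1),(1,0),(1,1)} then 1 else 0)"

definition tree_shift :: "tmat \<Rightarrow> tmat \<Rightarrow> (dir list \<Rightarrow> nat) set" where
  "tree_shift P Q = {t. (\<forall>x. t x \<in> {0,1}) \<and>
      (\<forall>x. P (t x) (t (x @ [A1])) = 1 \<and> Q (t x) (t (x @ [A2])) = 1)}"

definition Delta :: "nat \<Rightarrow> dir list set" where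
  "Delta n = {x. length x \<le> n}"

definition pcount :: "tmat \<Rightarrow> tmat \<Rightarrow> nat \<Rightarrow> nat" where
  "pcount P Q n = card ((\<lambda>t. restrict t (Delta n)) ` tree_shift P Q)"

definition hseq :: "tmat \<Rightarrow> tmat \<Rightarrow> nat \<Rightarrow> real" where
  "hseq P Q n = ln (real (pcount P Q n)) / real (\<Sum>i\<le>n. (2::nat) ^ i)"

end

theory Submission
  imports Defs
begin

text \<open>
  Write \<open>a\<^sub>n\<close>, \<open>b\<^sub>n\<close> for the numbers of allowed blocks of height \<open>n\<close> of \<open>(C,D)\<close> with root
  0 and 1. Since every symbol has a follower in both directions, allowed blocks are the same as
  locally admissible ones, and a block of height \<open>n+1\<close> is a root together with two independent
  blocks of height \<open>n\<close>; this gives \<open>a\<^sub>n\<^sub>+\<^sub>1 = b\<^sub>n(a\<^sub>n+b\<^sub>n)\<close>, \<open>b\<^sub>n\<^sub>+\<^sub>1 = a\<^sub>n\<^sup>2\<close>, and the same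
  recursion with the roles of 0 and 1 exchanged for \<open>(C,F)\<close>, so \<open>p(n) = a\<^sub>n + b\<^sub>n\<close> for both shifts.
  Hence \<open>p(n+1) \<le> p(n)\<^sup>2\<close>, so \<open>log p(n) / 2\<^sup>n\<^sup>+\<^sup>1\<close> decreases to the entropy, which is therefore at
  most \<open>log p(2) / 8 = log 7 / 8\<close>. Conversely \<open>min(a\<^sub>n,b\<^sub>n)\<close> at least squares in each step, and
  \<open>min(a\<^sub>4,b\<^sub>4) = 333 \<ge> 2\<^sup>8\<close> yields the lower bound \<open>log 2 / 4\<close>.
\<close>

lemma hseq_eq: "hseq P Q n = ln (pcount P Q n) / (2 ^ Suc n - 1)"
proof -
  have "(\<Sum>i\<le>n. (2::nat) ^ i) + 1 = 2 ^ Suc n"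
    by (induction n) auto
  then have "real (\<Sum>i\<le>n. (2::nat) ^ i) = 2 ^ Suc n - 1"
    by (metis add_diff_cancel_right' of_nat_1 of_nat_add of_nat_numeral of_nat_power)
  then show ?thesis by (simp add: hseq_def)
qed

lemma decseq_ln_div_power_2:
  fixes p :: "nat \<Rightarrow> nat"
  assumes pos: "\<And>n. 1 \<le> p n" and sq: "\<And>n. p (Suc n) \<le> p n ^ 2"
  shows "decseq (\<lambda>n. ln (p n) / 2 ^ Suc n)"
proof (rule decseq_SucI)
  fix n
  have "ln (p (Suc n)) \<le> ln (p n ^ 2)"
    using sq[of n] pos[of "Suc n"] pos[of n] by (subst ln_le_cancel_iff) (auto simp del: of_nat_power)
  also have "\<dots> = 2 * ln (p n)"
    using pos[of n] by (simp add: ln_realpow)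
  finally show "ln (p (Suc n)) / 2 ^ Suc (Suc n) \<le> ln (p n) / 2 ^ Suc n"
    by (simp add: field_simps)
qed

text \<open>The denominators \<open>2\<^sup>n\<^sup>+\<^sup>1 - 1\<close> and \<open>2\<^sup>n\<^sup>+\<^sup>1\<close> are asymptotically equal.\<close>
lemma ln_div_power_2_limit:
  fixes p :: "nat \<Rightarrow> nat"
  assumes pos: "\<And>n. 1 \<le> p n" and sq: "\<And>n. p (Suc n) \<le> p n ^ 2"
  obtains L where "(\<lambda>n. ln (p n) / (2 ^ Suc n - 1)) \<longlonglongrightarrow> L"
    and "\<And>n. L \<le> ln (p n) / 2 ^ Suc n"
proof -
  let ?v = "\<lambda>n. ln (p n) / 2 ^ Suc n"
  have "0 \<le> ?v n" for n
    using pos[of n] by simp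
  moreover have "decseq ?v"
    using pos sq by (rule decseq_ln_div_power_2)
  ultimately obtain L where vL: "?v \<longlonglongrightarrow> L" and L_le: "\<forall>n. L \<le> ?v n"
    using decseq_convergent by blast
  have half: "(\<lambda>n. (1 / 2 :: real) ^ Suc n) \<longlonglongrightarrow> 0"
    by (rule LIMSEQ_Suc) (rule LIMSEQ_power_zero, simp)
  have "(\<lambda>n. ?v n / (1 - (1 / 2) ^ Suc n)) \<longlonglongrightarrow> L"
    using tendsto_divide[OF vL tendsto_diff[OF tendsto_const[of 1] half]] by simp
  moreover have "(\<lambda>n. ?v n / (1 - (1 / 2) ^ Suc n)) = (\<lambda>n. ln (p n) / (2 ^ Suc n - 1))"
  proof
    fix n
    have "(2::real) ^ Suc n > 1" by (rule one_less_power) auto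
    then show "?v n / (1 - (1 / 2) ^ Suc n) = ln (p n) / (2 ^ Suc n - 1)"
      by (simp add: field_simps power_divide)
  qed
  ultimately show ?thesis
    using that L_le by simp
qed

lemma ln_div_power_2_ge:
  fixes p :: nat
  assumes "1 \<le> n" and "2 ^ 2 ^ (n - 1) \<le> p"
  shows "ln 2 / 4 \<le> ln p / (2 ^ Suc n - 1)"
proof -
  have "0 < p"
    using assms(2) by (metis less_le_trans pos2 zero_less_power)
  then have "ln (2 ^ 2 ^ (n - 1) :: real) \<le> ln p"
    using assms(2) by (subst ln_le_cancel_iff) (auto simp flip: of_nat_le_iff)
  then have "2 ^ (n - 1) * ln 2 \<le> ln p"
    by (simp add: ln_realpow)
  moreover have "(2::real) ^ Suc n = 4 * 2 ^ (n - 1)"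
    using assms(1) by (cases n) simp_all
  ultimately have "ln 2 / 4 \<le> ln p / 2 ^ Suc n"
    by (simp add: field_simps)
  also have "\<dots> \<le> ln p / (2 ^ Suc n - 1)"
  proof (rule divide_left_mono)
    show "0 \<le> ln p"
      using \<open>0 < p\<close> by simp
    have "(1::real) < 2 ^ Suc n"
      by (rule one_less_power) auto
    then show "0 < 2 ^ Suc n * (2 ^ Suc n - 1 :: real)"
      by simp
  qed simp
  finally show ?thesis .
qed

subsection \<open>Allowed blocks are the locally admissible ones\<close>

text \<open>Blocks are extensional, so that they coincide with the restrictions counted by \<open>pcount\<close>.\<close>
definition blocks :: "tmat \<Rightarrow> tmat \<Rightarrow> nat \<Rightarrow> (dir list \<Rightarrow> nat) set" where
  "blocks P Q n = {f \<in> extensional (Delta n). (\<forall>x\<in>Delta n. f x \<le> 1) \<and>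
     (\<forall>x. length x < n \<longrightarrow> P (f x) (f (x @ [A1])) = 1 \<and> Q (f x) (f (x @ [A2])) = 1)}"

definition blocks_at :: "tmat \<Rightarrow> tmat \<Rightarrow> nat \<Rightarrow> nat \<Rightarrow> (dir list \<Rightarrow> nat) set" where
  "blocks_at P Q n r = {f \<in> blocks P Q n. f [] = r}"

lemma dir_list_cases: obtains "x = []" | y where "x = A1 # y" | y where "x = A2 # y"
  by (metis dir.exhaust list.exhaust)

definition follow :: "(nat \<Rightarrow> nat) \<Rightarrow> (nat \<Rightarrow> nat) \<Rightarrow> nat \<Rightarrow> dir list \<Rightarrow> nat" where
  "follow sP sQ v y = foldl (\<lambda>v d. case d of A1 \<Rightarrow> sP v | A2 \<Rightarrow> sQ v) v y"

lemma follow_snoc: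
  "follow sP sQ v (y @ [d]) = (case d of A1 \<Rightarrow> sP (follow sP sQ v y) | A2 \<Rightarrow> sQ (follow sP sQ v y))"
  by (cases d) (simp_all add: follow_def)

lemma follow_le_1:
  assumes "\<And>v. v \<le> 1 \<Longrightarrow> sP v \<le> 1" "\<And>v. v \<le> 1 \<Longrightarrow> sQ v \<le> 1" "v \<le> 1"
  shows "follow sP sQ v y \<le> 1"
proof (induction y rule: rev_induct)
  case (snoc d y) then show ?case using assms by (cases d) (auto simp: follow_snoc)
qed (use assms(3) in \<open>simp add: follow_def\<close>)

text \<open>A block is extended to a whole tree by labelling every node below height \<open>n\<close> with a
  fixed follower of its parent's label.\<close>
lemma allowed_blocks_eq_blocks:
  assumes sP: "\<And>v. v \<le> 1 \<Longrightarrow> sP v \<le> 1 \<and> P v (sP v) = 1"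
      and sQ: "\<And>v. v \<le> 1 \<Longrightarrow> sQ v \<le> 1 \<and> Q v (sQ v) = 1"
  shows "(\<lambda>t. restrict t (Delta n)) ` tree_shift P Q = blocks P Q n"
proof
  show "(\<lambda>t. restrict t (Delta n)) ` tree_shift P Q \<subseteq> blocks P Q n"
    by (auto simp: tree_shift_def blocks_def Delta_def le_Suc_eq)
next
  show "blocks P Q n \<subseteq> (\<lambda>t. restrict t (Delta n)) ` tree_shift P Q"
  proof
    fix f assume "f \<in> blocks P Q n"
    then have f_ext: "\<And>x. n < length x \<Longrightarrow> f x = undefined"
      and f_le: "\<And>x. length x \<le> n \<Longrightarrow> f x \<le> 1"
      and f_rule: "\<And>x. length x < n \<Longrightarrow> P (f x) (f (x @ [A1])) = 1 \<and> Q (f x) (f (x @ [A2])) = 1"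
      by (auto simp: blocks_def extensional_def Delta_def)
    define t where "t x = (if length x \<le> n then f x else follow sP sQ (f (take n x)) (drop n x))" for x
    have t_le: "t x \<le> 1" for x
      unfolding t_def using f_le follow_le_1[of sP sQ] sP sQ by auto
    have t_rule: "P (t x) (t (x @ [A1])) = 1 \<and> Q (t x) (t (x @ [A2])) = 1" for x
    proof (cases "length x < n")
      case True then show ?thesis using f_rule by (simp add: t_def)
    next
      case False
      have "t x = follow sP sQ (f (take n x)) (drop n x)"
        using False by (cases "length x = n") (auto simp: t_def follow_def)
      moreover have "t (x @ [d]) = (case d of A1 \<Rightarrow> sP (follow sP sQ (f (take n x)) (drop n x))
                                       | A2 \<Rightarrow> sQ (follow sP sQ (f (take n x)) (drop n x)))" for d
        using False by (simp add: t_def follow_snoc)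
      ultimately show ?thesis using sP sQ t_le[of x] by simp
    qed
    have "t \<in> tree_shift P Q"
      using t_le t_rule by (auto simp: tree_shift_def le_Suc_eq)
    moreover have "restrict t (Delta n) = f"
      using f_ext by (auto simp: t_def Delta_def)
    ultimately show "f \<in> (\<lambda>t. restrict t (Delta n)) ` tree_shift P Q" by blast
  qed
qed

definition graft :: "nat \<Rightarrow> (dir list \<Rightarrow> nat) \<Rightarrow> (dir list \<Rightarrow> nat) \<Rightarrow> dir list \<Rightarrow> nat" where
  "graft r g1 g2 x = (case x of [] \<Rightarrow> r | A1 # y \<Rightarrow> g1 y | A2 # y \<Rightarrow> g2 y)"

lemma graft_simps [simp]:
  "graft r g1 g2 [] = r" "graft r g1 g2 (A1 # y) = g1 y" "graft r g1 g2 (A2 # y) = g2 y"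
  by (simp_all add: graft_def)

lemma inj_graft: "inj_on (\<lambda>(g1, g2). graft r g1 g2) X"
proof (rule inj_onI, clarify)
  fix g1 g2 h1 h2 assume eq: "graft r g1 g2 = graft r h1 h2"
  have "g1 y = h1 y" "g2 y = h2 y" for y
    using fun_cong[OF eq, of "A1 # y"] fun_cong[OF eq, of "A2 # y"] by simp_all
  then show "g1 = h1 \<and> g2 = h2" by auto
qed

lemma blocks_at_Suc:
  assumes "r \<le> 1"
  shows "blocks_at P Q (Suc n) r = (\<lambda>(g1, g2). graft r g1 g2) `
     ({g \<in> blocks P Q n. P r (g []) = 1} \<times> {g \<in> blocks P Q n. Q r (g []) = 1})"
    (is "?lhs = ?rhs")
proof
  show "?rhs \<subseteq> ?lhs"
  proof clarify
    fix g1 g2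
    assume g1: "g1 \<in> blocks P Q n" "P r (g1 []) = 1" and g2: "g2 \<in> blocks P Q n" "Q r (g2 []) = 1"
    have "graft r g1 g2 x = undefined" if "x \<notin> Delta (Suc n)" for x
      using that g1 g2 by (cases x rule: dir_list_cases) (auto simp: blocks_def extensional_def Delta_def)
    moreover have "graft r g1 g2 x \<le> 1" if "x \<in> Delta (Suc n)" for x
      using that g1 g2 assms by (cases x rule: dir_list_cases) (auto simp: blocks_def Delta_def)
    moreover have "P (graft r g1 g2 x) (graft r g1 g2 (x @ [A1])) = 1 \<and>
                   Q (graft r g1 g2 x) (graft r g1 g2 (x @ [A2])) = 1" if "length x < Suc n" for x
      using that g1 g2 by (cases x rule: dir_list_cases) (auto simp: blocks_def)
    ultimately show "graft r g1 g2 \<in> ?lhs"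
      by (auto simp: blocks_at_def blocks_def extensional_def)
  qed
next
  show "?lhs \<subseteq> ?rhs"
  proof
    fix f assume f: "f \<in> ?lhs"
    define g1 where "g1 y = f (A1 # y)" for y
    define g2 where "g2 y = f (A2 # y)" for y
    have f_graft: "f = graft r g1 g2"
    proof
      fix x show "f x = graft r g1 g2 x"
        using f by (cases x rule: dir_list_cases) (auto simp: blocks_at_def g1_def g2_def)
    qed
    have f_rule: "\<And>x. length x < Suc n \<Longrightarrow> P (f x) (f (x @ [A1])) = 1 \<and> Q (f x) (f (x @ [A2])) = 1"
      and "f [] = r" using f by (auto simp: blocks_at_def blocks_def)
    then have "P r (g1 []) = 1" "Q r (g2 []) = 1"
      using f_rule[of "[]"] by (auto simp: g1_def g2_def)
    moreover have "g1 \<in> blocks P Q n" "g2 \<in> blocks P Q n"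
      using f f_rule[of "A1 # _"] f_rule[of "A2 # _"]
      by (auto simp: blocks_at_def blocks_def extensional_def Delta_def g1_def g2_def)
    ultimately show "f \<in> ?rhs" using f_graft by blast
  qed
qed

lemma card_blocks_at_Suc:
  assumes "r \<le> 1"
  shows "card (blocks_at P Q (Suc n) r) =
           card {g \<in> blocks P Q n. P r (g []) = 1} * card {g \<in> blocks P Q n. Q r (g []) = 1}"
  by (simp add: blocks_at_Suc[OF assms] card_image[OF inj_graft] card_cartesian_product)

lemma card_blocks_at_0:
  assumes "r \<le> 1"
  shows "card (blocks_at P Q 0 r) = 1"
proof -
  have "blocks_at P Q 0 r = {restrict (\<lambda>_. r) (Delta 0)}"
  proof safe
    fix f assume f: "f \<in> blocks_at P Q 0 r"
    show "f = restrict (\<lambda>_. r) (Delta 0)"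
    proof
      fix x show "f x = restrict (\<lambda>_. r) (Delta 0) x"
        using f by (cases x) (auto simp: blocks_at_def blocks_def Delta_def extensional_def)
    qed
  qed (use assms in \<open>auto simp: blocks_at_def blocks_def Delta_def\<close>)
  then show ?thesis by simp
qed

lemma finite_Delta: "finite (Delta n)"
proof -
  have "finite (UNIV :: dir set)"
    by (metis (full_types) dir.exhaust finite.emptyI finite.insertI finite_subset insertCI subsetI)
  then show ?thesis
    using finite_lists_length_le[of "UNIV :: dir set" n] by (simp add: Delta_def)
qed

lemma finite_blocks: "finite (blocks P Q n)"
proof (rule finite_subset)
  show "blocks P Q n \<subseteq> Delta n \<rightarrow>\<^sub>E {0..1}" by (auto simp: blocks_def PiE_def Pi_def)
  show "finite (Delta n \<rightarrow>\<^sub>E {0..1::nat})" by (rule finite_PiE[OF finite_Delta]) auto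
qed

lemma blocks_root_le_1: "f \<in> blocks P Q n \<Longrightarrow> f [] \<le> 1"
  by (auto simp: blocks_def Delta_def)

lemma card_blocks: "card (blocks P Q n) = card (blocks_at P Q n 0) + card (blocks_at P Q n 1)"
proof -
  have "blocks P Q n = blocks_at P Q n 0 \<union> blocks_at P Q n 1"
    by (auto simp: blocks_at_def le_Suc_eq dest: blocks_root_le_1)
  moreover have "blocks_at P Q n 0 \<inter> blocks_at P Q n 1 = {}"
    by (auto simp: blocks_at_def)
  moreover have "finite (blocks_at P Q n r)" for r
    using finite_blocks by (rule finite_subset[rotated]) (auto simp: blocks_at_def)
  ultimately show ?thesis by (simp add: card_Un_disjoint)
qed

lemma matC_successors:
  "{g \<in> blocks matC Q n. matC 0 (g []) = 1} = blocks_at matC Q n 1"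
  "{g \<in> blocks matC Q n. matC 1 (g []) = 1} = blocks_at matC Q n 0"
  by (auto simp: blocks_at_def matC_def dest: blocks_root_le_1)

lemma matD_successors:
  "{g \<in> blocks P matD n. matD 0 (g []) = 1} = blocks P matD n"
  "{g \<in> blocks P matD n. matD 1 (g []) = 1} = blocks_at P matD n 0"
  by (auto simp: blocks_at_def matD_def dest: blocks_root_le_1)

lemma matF_successors:
  "{g \<in> blocks P matF n. matF 0 (g []) = 1} = blocks_at P matF n 1"
  "{g \<in> blocks P matF n. matF 1 (g []) = 1} = blocks P matF n"
  by (auto simp: blocks_at_def matF_def dest: blocks_root_le_1)

fun root_counts :: "nat \<Rightarrow> nat \<times> nat" where
  "root_counts 0 = (1, 1)"
| "root_counts (Suc n) =
     (snd (root_counts n) * (fst (root_counts n) + snd (root_counts n)),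
      fst (root_counts n) * fst (root_counts n))"

lemma card_blocks_at_CD_CF:
  "card (blocks_at matC matD n 0) = fst (root_counts n) \<and>
   card (blocks_at matC matD n 1) = snd (root_counts n) \<and>
   card (blocks_at matC matF n 0) = snd (root_counts n) \<and>
   card (blocks_at matC matF n 1) = fst (root_counts n)"
proof (induction n)
  case 0 then show ?case by (simp add: card_blocks_at_0)
next
  case (Suc n)
  have "card (blocks_at matC matD (Suc n) 0) = card (blocks_at matC matD n 1) * card (blocks matC matD n)"
    using card_blocks_at_Suc[of 0 matC matD n, unfolded matC_successors matD_successors]
    by (simp add: power2_eq_square)
  moreover have "card (blocks_at matC matD (Suc n) 1) = card (blocks_at matC matD n 0) ^ 2"
    using card_blocks_at_Suc[of 1 matC matD n, unfolded matC_successors matD_successors]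
    by (simp add: power2_eq_square)
  moreover have "card (blocks_at matC matF (Suc n) 0) = card (blocks_at matC matF n 1) ^ 2"
    using card_blocks_at_Suc[of 0 matC matF n, unfolded matC_successors matF_successors]
    by (simp add: power2_eq_square)
  moreover have "card (blocks_at matC matF (Suc n) 1) = card (blocks_at matC matF n 0) * card (blocks matC matF n)"
    using card_blocks_at_Suc[of 1 matC matF n, unfolded matC_successors matF_successors]
    by (simp add: power2_eq_square)
  ultimately show ?case using Suc.IH by (simp add: card_blocks power2_eq_square)
qed

lemma pcount_CD: "pcount matC matD n = fst (root_counts n) + snd (root_counts n)"
proof -
  have "pcount matC matD n = card (blocks matC matD n)"
    unfolding pcount_def
    by (subst allowed_blocks_eq_blocks[where sP="\<lambda>v. 1 - v" and sQ="\<lambda>v. 0"])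
       (auto simp: matC_def matD_def le_Suc_eq)
  then show ?thesis using card_blocks_at_CD_CF by (simp add: card_blocks)
qed

lemma pcount_CF: "pcount matC matF n = fst (root_counts n) + snd (root_counts n)"
proof -
  have "pcount matC matF n = card (blocks matC matF n)"
    unfolding pcount_def
    by (subst allowed_blocks_eq_blocks[where sP="\<lambda>v. 1 - v" and sQ="\<lambda>v. 1"])
       (auto simp: matC_def matF_def le_Suc_eq)
  then show ?thesis using card_blocks_at_CD_CF by (simp add: card_blocks)
qed

lemma root_counts_pos: "1 \<le> fst (root_counts n) \<and> 1 \<le> snd (root_counts n)"
  by (induction n) auto

lemma total_root_counts_Suc_le:
  "fst (root_counts (Suc n)) + snd (root_counts (Suc n)) \<le> (fst (root_counts n) + snd (root_counts n)) ^ 2"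
  by (simp add: power2_eq_square algebra_simps)

lemma min_root_counts_power_le:
  "min (fst (root_counts n)) (snd (root_counts n)) ^ 2 ^ k \<le>
   min (fst (root_counts (n + k))) (snd (root_counts (n + k)))"
proof (induction k)
  case (Suc k)
  let ?a = "fst (root_counts (n + k))" and ?b = "snd (root_counts (n + k))"
  let ?m = "min (fst (root_counts n)) (snd (root_counts n))"
  have "?m ^ 2 ^ Suc k = (?m ^ 2 ^ k) ^ 2"
    by (simp add: mult.commute flip: power_mult)
  also have "\<dots> \<le> min ?a ?b ^ 2"
    using Suc.IH by (rule power_mono) simp
  also have "\<dots> \<le> min (?b * (?a + ?b)) (?a * ?a)"
    by (simp add: power2_eq_square mult_le_mono trans_le_add1)
  finally show ?case by simp
qed simp

lemma pcount_CD_ge: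
  assumes "4 \<le> n"
  shows "2 ^ 2 ^ (n - 1) \<le> pcount matC matD n"
proof -
  obtain k where n: "n = 4 + k" using assms le_Suc_ex by blast
  have "root_counts 4 = (333, 784)"
    by (simp add: numeral_eq_Suc)
  then have "333 ^ 2 ^ k \<le> min (fst (root_counts n)) (snd (root_counts n))"
    using min_root_counts_power_le[of 4 k] n by simp
  moreover have "(2::nat) ^ 2 ^ (n - 1) \<le> 333 ^ 2 ^ k"
  proof -
    have "(2::nat) ^ 2 ^ (n - 1) = (2 ^ 8) ^ 2 ^ k"
      by (simp add: n power_add power_mult)
    then show ?thesis by (simp add: power_mono)
  qed
  ultimately show ?thesis
    by (simp add: pcount_CD)
qed

theorem mainTheorem17:
  shows "convergent (hseq matC matD) \<and> convergent (hseq matC matF) \<and>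
         lim (hseq matC matD) = lim (hseq matC matF) \<and>
         ln 2 / 4 \<le> lim (hseq matC matD) \<and> lim (hseq matC matD) \<le> ln 7 / 8"
proof -
  have same: "hseq matC matF = hseq matC matD"
    by (rule ext) (simp add: hseq_def pcount_CD pcount_CF)
  have "1 \<le> pcount matC matD n" for n
    using root_counts_pos[of n] by (simp add: pcount_CD)
  moreover have "pcount matC matD (Suc n) \<le> pcount matC matD n ^ 2" for n
    using total_root_counts_Suc_le by (simp add: pcount_CD)
  ultimately obtain L where "(\<lambda>n. ln (pcount matC matD n) / (2 ^ Suc n - 1)) \<longlonglongrightarrow> L"
    and L_le: "\<And>n. L \<le> ln (pcount matC matD n) / 2 ^ Suc n"
    by (rule ln_div_power_2_limit[of "pcount matC matD"]) auto
  then have lim: "hseq matC matD \<longlonglongrightarrow> L"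
    by (simp add: hseq_eq[abs_def])
  have "L \<le> ln 7 / 8"
    using L_le[of 2] by (simp add: pcount_CD numeral_eq_Suc)
  moreover have "ln 2 / 4 \<le> hseq matC matD n" if "4 \<le> n" for n
    unfolding hseq_eq using that by (intro ln_div_power_2_ge pcount_CD_ge) auto
  then have "ln 2 / 4 \<le> L"
    by (intro LIMSEQ_le_const[OF lim]) auto
  ultimately show ?thesis
    using lim same limI by (auto simp: convergent_def)
qed

end
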